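(* Let $0\le n\le r$ and let $\mathscr I=[I_0,\dots,I_n]$ be a proper ideal of $\Omega_{H_n}$. Then $\mathscr I$ is prime if and only if for each $0\le k\le n$ the following condition $\mathcal P(k)$ holds: for every $0\le i\le k$, every $a\in L_k(I_{k-1})$ and every $b\in L_i(I_{i-1})\setminus I_i$, $$a\cdot\mathrm{jnd}^k_i(b)\in I_k\ \Longrightarrow\ a\in I_k,$$ where $L_j(I_{j-1})=(\mathrm{res}^j_{j-1})^{-1}(I_{j-1})$ for $j\ge1$ and $L_0(I_{-1}):=R_0$. (In particular $\mathcal P(0)$ says that $I_0$ is a prime ideal of the ring $R_0\cong\mathbb{Z}$.)
   Context: Fix a prime $p$ and an integer $r\ge0$. For $0\le k\le r$ let $R_k$ be the commutative ring which is free as a $\mathbb{Z}$-module with basis $X_{k,0},\dots,X_{k,k}$ and multiplication $X_{k,i}X_{k,j}=p^{k-\max(i,j)}X_{k,\min(i,j)}$; thus $X_{k,k}=1$, and an integer $n$ is identified with $nX_{k,k}$. For $0\le k\le\ell\le r$ define: the additive map $\mathrm{ind}^\ell_k:R_k\to R_\ell$, $X_{k,i}\mapsto X_{\ell,i}$; the ring homomorphism $\mathrm{res}^\ell_k:R_\ell\to R_k$, $\mathrm{res}^\ell_k(X_{\ell,i})=p^{\ell-k}X_{k,i}$ if $i\le k$ and $=p^{\ell-i}$ if $i\ge k$; and the multiplicative map $\mathrm{jnd}^\ell_k:R_k\to R_\ell$, $$\mathrm{jnd}^\ell_k\Big(\sum_{i=0}^k m_iX_{k,i}\Big)=m_kX_{\ell,\ell}+\sum_{k\le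 i<\ell}\frac{m_k^{p^{\ell-i}}-m_k^{p^{\ell-i-1}}}{p^{\ell-i}}X_{\ell,i}+\sum_{0\le i<k}\frac{(\sum_{s=i}^k m_sp^{k-s})^{p^{\ell-k}}-(\sum_{s=i+1}^k m_sp^{k-s})^{p^{\ell-k}}}{p^{\ell-i}}X_{\ell,i}$$ ($m_i\in\mathbb{Z}$). For $k=\ell$ these maps are the identity. These data form the Burnside Tambara functor on $\mathbb{Z}/p^r\mathbb{Z}$; keeping indices $\le n$ gives $\Omega_{H_n}$. An ideal of $\Omega_{H_n}$ is a sequence $[I_0,\dots,I_n]$ of ideals $I_k\subseteq R_k$ such that for every $1\le k\le n$: $\mathrm{ind}^k_{k-1}(I_{k-1})\subseteq I_k$, $\mathrm{res}^k_{k-1}(I_k)\subseteq I_{k-1}$, $\mathrm{jnd}^k_{k-1}(I_{k-1})\subseteq I_k$. It is proper if $I_0\ne R_0$. A proper ideal is prime if for all $0\le\ell\le k\le n$, $a\in R_k$, $b\in R_\ell$: whenever $(\mathrm{jnd}^m_i\mathrm{res}^k_i(a))\cdot(\mathrm{jnd}^m_j\mathrm{res}^\ell_j(b))\in I_m$ for all $0\le i\le k$, $0\le j\le\ell$, $m=\max(i,j)$, then $a\in I_k$ or $b\in I_\ell$. *)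

theory Defs
  imports Main "HOL-Computational_Algebra.Primes"
begin

text \<open>An element of R_k = Z X_{k,0} + ... + Z X_{k,k} is represented by its coefficient
  function m :: nat => int (m i = coefficient of X_{k,i}), vanishing above k.\<close>

type_synonym elt = "nat \<Rightarrow> int"

definition carrierR :: "nat \<Rightarrow> elt set" where
  "carrierR k = {m. \<forall>i>k. m i = 0}"

definition zeroR :: elt where "zeroR = (\<lambda>_. 0)"

definition addR :: "elt \<Rightarrow> elt \<Rightarrow> elt" where
  "addR x y = (\<lambda>i. x i + y i)"

definition negR :: "elt \<Rightarrow> elt" where
  "negR x = (\<lambda>i. - x i)"

text \<open>X_{k,i} X_{k,j} = p^(k - max i j) X_{k, min i j}\<close>
definition multR :: "nat \<Rightarrow> nat \<Rightarrow> elt \<Rightarrow> elt \<Rightarrow> elt" where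
  "multR p k x y = (\<lambda>j. if j \<le> k then
      (\<Sum>i\<le>k. \<Sum>l\<le>k. if min i l = j then x i * y l * int p ^ (k - max i l) else 0)
    else 0)"

definition is_idealR :: "nat \<Rightarrow> nat \<Rightarrow> elt set \<Rightarrow> bool" where
  "is_idealR p k I \<longleftrightarrow> I \<subseteq> carrierR k \<and> zeroR \<in> I
     \<and> (\<forall>x\<in>I. \<forall>y\<in>I. addR x y \<in> I) \<and> (\<forall>x\<in>I. negR x \<in> I)
     \<and> (\<forall>x\<in>I. \<forall>y\<in>carrierR k. multR p k y x \<in> I)"

text \<open>ind^l_k : X_{k,i} |-> X_{l,i}\<close>
definition indR :: "nat \<Rightarrow> nat \<Rightarrow> elt \<Rightarrow> elt" where
  "indR k l m = m"

text \<open>res^l_k (X_{l,i}) = p^(l-k) X_{k,i} if i <= k, = p^(l-i) X_{k,k} if i >= k\<close>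
definition resR :: "nat \<Rightarrow> nat \<Rightarrow> nat \<Rightarrow> elt \<Rightarrow> elt" where
  "resR p l k m = (\<lambda>j. if j < k then int p ^ (l - k) * m j
     else if j = k then (\<Sum>i\<in>{k..l}. m i * int p ^ (l - i))
     else 0)"

text \<open>jnd^l_k, the multiplicative (norm) map, with the given integer formula
  (the quotients are exact; we use integer division).\<close>
definition jndR :: "nat \<Rightarrow> nat \<Rightarrow> nat \<Rightarrow> elt \<Rightarrow> elt" where
  "jndR p k l m = (\<lambda>i.
     if i = l then m k
     else if k \<le> i \<and> i < l then
       (m k ^ (p ^ (l - i)) - m k ^ (p ^ (l - i - 1))) div int p ^ (l - i)
     else if i < k then
       ((\<Sum>s\<in>{i..k}. m s * int p ^ (k - s)) ^ (p ^ (l - k))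
        - (\<Sum>s\<in>{i+1..k}. m s * int p ^ (k - s)) ^ (p ^ (l - k))) div int p ^ (l - i)
     else 0)"

definition is_tambara_ideal :: "nat \<Rightarrow> nat \<Rightarrow> (nat \<Rightarrow> elt set) \<Rightarrow> bool" where
  "is_tambara_ideal p n I \<longleftrightarrow>
     (\<forall>k\<le>n. is_idealR p k (I k)) \<and>
     (\<forall>k. 1 \<le> k \<and> k \<le> n \<longrightarrow>
        indR (k - 1) k ` I (k - 1) \<subseteq> I k \<and>
        resR p k (k - 1) ` I k \<subseteq> I (k - 1) \<and>
        jndR p (k - 1) k ` I (k - 1) \<subseteq> I k)"

definition proper_tambara_ideal :: "nat \<Rightarrow> nat \<Rightarrow> (nat \<Rightarrow> elt set) \<Rightarrow> bool" where
  "proper_tambara_ideal p n I \<longleftrightarrow> is_tambara_ideal p n I \<and> I 0 \<noteq> carrierR 0"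

definition prime_tambara_ideal :: "nat \<Rightarrow> nat \<Rightarrow> (nat \<Rightarrow> elt set) \<Rightarrow> bool" where
  "prime_tambara_ideal p n I \<longleftrightarrow> proper_tambara_ideal p n I \<and>
     (\<forall>k l a b. l \<le> k \<and> k \<le> n \<and> a \<in> carrierR k \<and> b \<in> carrierR l \<longrightarrow>
        (\<forall>i\<le>k. \<forall>j\<le>l.
           multR p (max i j) (jndR p i (max i j) (resR p k i a))
                             (jndR p j (max i j) (resR p l j b)) \<in> I (max i j))
        \<longrightarrow> a \<in> I k \<or> b \<in> I l)"

definition Lset :: "nat \<Rightarrow> (nat \<Rightarrow> elt set) \<Rightarrow> nat \<Rightarrow> elt set" where
  "Lset p I j = (if j = 0 then carrierR 0
                 else {a \<in> carrierR j. resR p j (j - 1) a \<in> I (j - 1)})"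

definition condP :: "nat \<Rightarrow> (nat \<Rightarrow> elt set) \<Rightarrow> nat \<Rightarrow> bool" where
  "condP p I k \<longleftrightarrow> (\<forall>i\<le>k. \<forall>a\<in>Lset p I k. \<forall>b\<in>Lset p I i - I i.
      multR p k a (jndR p i k b) \<in> I k \<longrightarrow> a \<in> I k)"

end

theory Submission
  imports Defs "HOL-Number_Theory.Number_Theory"
begin

text \<open>An element x of R_k is determined by its marks
  mark_j(x) = x_j p^(k-j) + ... + x_k, 0 \<le> j \<le> k (the number of points fixed by the
  subgroup of order p^j). In marks, res forgets the levels above its target and jnd^l_k acts by
  mark_j(jnd x) = mark_(min j k)(x)^(p^(l - max j k)); that the integer quotients defining jnd are
  exact, and this identity, follow from Fermat and from a \<equiv> b mod p^e \<Longrightarrow>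
  a^(p^t) \<equiv> b^(p^t) mod p^(e+t) for e \<ge> 1. Hence res and jnd are transitive and an ideal is
  carried by them to every intermediate level.

  If the ideal is prime and a \<in> L_k, b \<in> L_i - I_i, then res a and res b lie in the ideal
  below levels k and i, so every test product for (a, b) except a * jnd^k_i b is in the ideal.
  Conversely, if a \<notin> I_k and b \<notin> I_l, take the least levels i, j at which their
  restrictions leave the ideal: there they lie in the L-sets, and the test product at (i, j)
  contradicts condition P at level max i j.\<close>

lemma cong_pow_prime_int:
  fixes a :: int
  assumes "prime p"
  shows "[a ^ p = a] (mod int p)"
proof -
  have p: "p > 0" using assms prime_gt_0_nat by blast
  have nat_case: "[b ^ p = b] (mod p)" for b :: nat
  proof (cases "p dvd b")
    case True
    moreover have "p dvd b ^ p" using True p by (meson dvd_power dvd_trans)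
    ultimately show ?thesis by (simp add: cong_def dvd_imp_mod_0)
  next
    case False
    have "[b ^ (p - 1) * b = 1 * b] (mod p)"
      using fermat_theorem[OF assms False] by (rule cong_mult) (rule cong_refl)
    then show ?thesis by (simp only: power_minus_mult[OF p] mult_1)
  qed
  define b where "b = nat (a mod int p)"
  have b: "[int b = a] (mod int p)" using p by (simp add: b_def cong_def)
  have "[a ^ p = int b ^ p] (mod int p)" using b by (simp add: cong_pow cong_sym)
  also have "[int b ^ p = int b] (mod int p)"
    using nat_case[of b] by (metis cong_int_iff of_nat_power)
  also note b
  finally show ?thesis .
qed

lemma prime_power_dvd_diff_pow_prime:
  fixes a b :: int
  assumes "prime p" and "e \<ge> 1" and "int p ^ e dvd a - b"
  shows "int p ^ (e + 1) dvd a ^ p - b ^ p"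
proof -
  have "int p dvd int p ^ e" using assms(2) by (simp add: dvd_power)
  then have ab: "[a = b] (mod int p)" using assms(3) by (simp add: cong_iff_dvd_diff dvd_trans)
  have "[(\<Sum>i<p. b ^ (p - Suc i) * a ^ i) = (\<Sum>i<p. b ^ (p - Suc i) * b ^ i)] (mod int p)"
    by (intro cong_sum cong_mult cong_refl cong_pow ab)
  also have "(\<Sum>i<p. b ^ (p - Suc i) * b ^ i) = (\<Sum>i<p. b ^ (p - 1))"
    by (intro sum.cong refl) (simp flip: power_add)
  finally have "int p dvd (\<Sum>i<p. b ^ (p - Suc i) * a ^ i)"
    by (simp add: cong_dvd_iff)
  with assms(3) have "int p ^ e * int p dvd (a - b) * (\<Sum>i<p. b ^ (p - Suc i) * a ^ i)"
    by (rule mult_dvd_mono)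
  then show ?thesis by (simp add: power_diff_sumr2 mult.commute)
qed

lemma prime_power_dvd_diff_pow_prime_power:
  fixes a b :: int
  assumes "prime p" and "e \<ge> 1" and "int p ^ e dvd a - b"
  shows "int p ^ (e + t) dvd a ^ (p ^ t) - b ^ (p ^ t)"
proof (induction t)
  case 0
  then show ?case using assms(3) by simp
next
  case (Suc t)
  then have "int p ^ (e + t + 1) dvd (a ^ p ^ t) ^ p - (b ^ p ^ t) ^ p"
    using prime_power_dvd_diff_pow_prime[OF assms(1)] assms(2) by simp
  then show ?case by (simp add: power_mult[symmetric] mult.commute)
qed

lemma prime_power_dvd_pow_prime_power_diff:
  fixes a :: int
  assumes "prime p" and "t \<ge> 1"
  shows "int p ^ t dvd a ^ (p ^ t) - a ^ (p ^ (t - 1))"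
proof -
  have "int p ^ 1 dvd a ^ p - a"
    using cong_pow_prime_int[OF assms(1)] by (simp add: cong_iff_dvd_diff)
  then have "int p ^ (1 + (t - 1)) dvd (a ^ p) ^ (p ^ (t - 1)) - a ^ (p ^ (t - 1))"
    by (rule prime_power_dvd_diff_pow_prime_power[OF assms(1) order_refl])
  moreover have "(a ^ p) ^ (p ^ (t - 1)) = a ^ (p ^ t)"
    using assms(2) by (metis Suc_diff_1 less_le_trans power_Suc power_mult zero_less_one)
  ultimately show ?thesis using assms(2) by simp
qed

definition mark :: "nat \<Rightarrow> nat \<Rightarrow> nat \<Rightarrow> elt \<Rightarrow> int" where
  "mark p k j x = (\<Sum>s\<in>{j..k}. x s * int p ^ (k - s))"

lemma mark_top: "mark p k k x = x k"
  by (simp add: mark_def)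

lemma mark_Suc: "j < k \<Longrightarrow> mark p k j x = x j * int p ^ (k - j) + mark p k (Suc j) x"
  unfolding mark_def by (simp add: sum.atLeast_Suc_atMost)

lemma carrierR_eqI_marks:
  assumes "p > 0" and "x \<in> carrierR k" and "y \<in> carrierR k"
    and "\<And>j. j \<le> k \<Longrightarrow> mark p k j x = mark p k j y"
  shows "x = y"
proof
  fix j
  show "x j = y j"
  proof (cases "j < k")
    case True
    then have "x j * int p ^ (k - j) = y j * int p ^ (k - j)"
      using mark_Suc[OF True, of p x] mark_Suc[OF True, of p y] assms(4)[of j] assms(4)[of "Suc j"]
      by linarith
    then show ?thesis using assms(1) by simp
  next
    case False
    then show ?thesis
      using assms(2,3) assms(4)[of k] by (cases "j = k") (auto simp: carrierR_def mark_top)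
  qed
qed

lemma resR_carrierR: "resR p l k x \<in> carrierR k"
  by (simp add: carrierR_def resR_def)

lemma jndR_carrierR: "k \<le> l \<Longrightarrow> jndR p k l x \<in> carrierR l"
  by (simp add: carrierR_def jndR_def)

lemma multR_commute: "multR p k x y = multR p k y x"
proof
  fix j
  have "(if min i l = j then x i * y l * int p ^ (k - max i l) else 0)
      = (if min l i = j then y l * x i * int p ^ (k - max l i) else 0)" for i l
    by (simp add: min.commute max.commute mult.commute)
  then have "(\<Sum>i\<le>k. \<Sum>l\<le>k. if min i l = j then x i * y l * int p ^ (k - max i l) else 0)
      = (\<Sum>l\<le>k. \<Sum>i\<le>k. if min l i = j then y l * x i * int p ^ (k - max l i) else 0)"
    using sum.swap by simp
  then show "multR p k x y j = multR p k y x j"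
    by (simp add: multR_def)
qed

lemma mark_resR:
  assumes "k \<le> l" and "j \<le> k"
  shows "mark p k j (resR p l k x) = mark p l j x"
proof -
  have split: "{j..l} = {j..<k} \<union> {k..l}" "{j..k} = {j..<k} \<union> {k}"
    and disjoint: "{j..<k} \<inter> {k..l} = {}"
    using assms by auto
  have "(\<Sum>s\<in>{j..<k}. resR p l k x s * int p ^ (k - s)) = (\<Sum>s\<in>{j..<k}. x s * int p ^ (l - s))"
  proof (intro sum.cong refl)
    fix s assume "s \<in> {j..<k}"
    then have "int p ^ (l - s) = int p ^ (l - k) * int p ^ (k - s)"
      using assms by (simp flip: power_add)
    then show "resR p l k x s * int p ^ (k - s) = x s * int p ^ (l - s)"
      using \<open>s \<in> {j..<k}\<close> by (simp add: resR_def)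
  qed
  then show ?thesis
    unfolding mark_def split by (simp add: sum.union_disjoint disjoint resR_def)
qed

lemma resR_id: "x \<in> carrierR k \<Longrightarrow> resR p k k x = x"
  by (auto simp: resR_def carrierR_def fun_eq_iff)

lemma resR_trans:
  assumes "p > 0" and "x \<in> carrierR l" and "j \<le> k" and "k \<le> l"
  shows "resR p k j (resR p l k x) = resR p l j x"
  using assms by (intro carrierR_eqI_marks[where k = j]) (auto simp: resR_carrierR mark_resR)

lemma jndR_id:
  assumes "p > 0" and "x \<in> carrierR k"
  shows "jndR p k k x = x"
proof
  fix i
  show "jndR p k k x i = x i"
  proof (cases "i < k")
    case True
    then have "(\<Sum>s\<in>{i..k}. x s * int p ^ (k - s)) - (\<Sum>s\<in>{i+1..k}. x s * int p ^ (k - s))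
        = x i * int p ^ (k - i)"
      by (simp add: sum.atLeast_Suc_atMost)
    then show ?thesis using True assms(1) by (simp add: jndR_def)
  next
    case False
    then show ?thesis using assms(2) by (auto simp: jndR_def carrierR_def)
  qed
qed

lemma jndR_coeff:
  assumes "prime p" and "k \<le> l" and "j < l"
  shows "jndR p k l x j * int p ^ (l - j) =
    mark p k (min j k) x ^ p ^ (l - max j k) - mark p k (min (Suc j) k) x ^ p ^ (l - max (Suc j) k)"
proof (cases "k \<le> j")
  case True
  have "int p ^ (l - j) dvd x k ^ p ^ (l - j) - x k ^ p ^ (l - j - 1)"
    using prime_power_dvd_pow_prime_power_diff[OF assms(1), of "l - j"] assms(3) by simp
  then show ?thesis using True assms(3) by (simp add: jndR_def mark_top diff_diff_left)
next
  case False
  then have "mark p k j x - mark p k (Suc j) x = x j * int p ^ (k - j)"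
    by (simp add: mark_Suc)
  then have "int p ^ (k - j + (l - k)) dvd mark p k j x ^ p ^ (l - k) - mark p k (Suc j) x ^ p ^ (l - k)"
    using False by (intro prime_power_dvd_diff_pow_prime_power[OF assms(1)]) simp_all
  moreover have "k - j + (l - k) = l - j" using False assms(2) by simp
  ultimately show ?thesis
    using False assms(3) by (simp add: jndR_def mark_def Suc_le_eq)
qed

lemma mark_jndR:
  assumes "prime p" and "k \<le> l" and "j \<le> l"
  shows "mark p l j (jndR p k l x) = mark p k (min j k) x ^ p ^ (l - max j k)"
  using assms(3)
proof (induction j rule: inc_induct)
  case base
  then show ?case using assms(2) by (simp add: mark_top jndR_def)
next
  case (step j)
  then show ?case
    using mark_Suc[OF step.hyps(2)] jndR_coeff[OF assms(1,2) step.hyps(2)] by simp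
qed

lemma jndR_trans:
  assumes p: "prime p" and x: "x \<in> carrierR i" and "i \<le> m" and "m \<le> l"
  shows "jndR p m l (jndR p i m x) = jndR p i l x"
proof (rule carrierR_eqI_marks)
  show "p > 0" using p prime_gt_0_nat by blast
  show "jndR p m l (jndR p i m x) \<in> carrierR l" "jndR p i l x \<in> carrierR l"
    using assms by (simp_all add: jndR_carrierR)
next
  fix j assume "j \<le> l"
  have exponents: "(m - max (min j m) i) + (l - max j m) = l - max j i"
    using assms(3,4) \<open>j \<le> l\<close> by (auto simp: max_def min_def)
  have "mark p l j (jndR p m l (jndR p i m x))
      = mark p i (min j i) x ^ (p ^ (m - max (min j m) i) * p ^ (l - max j m))"
    using assms \<open>j \<le> l\<close> by (simp add: mark_jndR min_def power_mult)
  also have "\<dots> = mark p l j (jndR p i l x)"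
    using assms \<open>j \<le> l\<close> by (simp add: mark_jndR exponents flip: power_add)
  finally show "mark p l j (jndR p m l (jndR p i m x)) = mark p l j (jndR p i l x)" .
qed

lemma tambara_ideal_subset_carrierR:
  "is_tambara_ideal p n I \<Longrightarrow> k \<le> n \<Longrightarrow> I k \<subseteq> carrierR k"
  by (simp add: is_tambara_ideal_def is_idealR_def)

lemma tambara_ideal_multR:
  "is_tambara_ideal p n I \<Longrightarrow> k \<le> n \<Longrightarrow> x \<in> I k \<Longrightarrow> y \<in> carrierR k \<Longrightarrow> multR p k y x \<in> I k"
  by (simp add: is_tambara_ideal_def is_idealR_def)

lemma tambara_ideal_resR_Suc:
  assumes "is_tambara_ideal p n I" and "Suc i \<le> n" and "x \<in> I (Suc i)"
  shows "resR p (Suc i) i x \<in> I i"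
  using assms unfolding is_tambara_ideal_def
  by (metis (no_types, lifting) diff_Suc_1 image_subset_iff le_add1 plus_1_eq_Suc)

lemma tambara_ideal_jndR_Suc:
  assumes "is_tambara_ideal p n I" and "Suc i \<le> n" and "x \<in> I i"
  shows "jndR p i (Suc i) x \<in> I (Suc i)"
  using assms unfolding is_tambara_ideal_def
  by (metis (no_types, lifting) diff_Suc_1 image_subset_iff le_add1 plus_1_eq_Suc)

lemma tambara_ideal_resR:
  assumes "p > 0" and T: "is_tambara_ideal p n I" and "k \<le> n" and x: "x \<in> I k" and "i \<le> k"
  shows "resR p k i x \<in> I i"
  using \<open>i \<le> k\<close>
proof (induction i rule: inc_induct)
  case base
  then show ?case using x tambara_ideal_subset_carrierR[OF T \<open>k \<le> n\<close>] by (auto simp: resR_id)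
next
  case (step i)
  then have "resR p (Suc i) i (resR p k (Suc i) x) \<in> I i"
    using tambara_ideal_resR_Suc[OF T] \<open>k \<le> n\<close> by simp
  then show ?case
    using resR_trans[OF \<open>p > 0\<close>, of x k i "Suc i"] tambara_ideal_subset_carrierR[OF T \<open>k \<le> n\<close>]
      x step.hyps by auto
qed

lemma tambara_ideal_jndR:
  assumes p: "prime p" and T: "is_tambara_ideal p n I" and x: "x \<in> I i" and "i \<le> m" and "m \<le> n"
  shows "jndR p i m x \<in> I m"
  using \<open>i \<le> m\<close> \<open>m \<le> n\<close>
proof (induction m rule: dec_induct)
  case base
  then have "x \<in> carrierR i" using x tambara_ideal_subset_carrierR[OF T] by blast
  then show ?case using x prime_gt_0_nat[OF p] by (simp add: jndR_id)
next
  case (step m)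
  then have "jndR p m (Suc m) (jndR p i m x) \<in> I (Suc m)"
    using tambara_ideal_jndR_Suc[OF T] by simp
  then show ?case
    using jndR_trans[OF p, of x i m "Suc m"] tambara_ideal_subset_carrierR[OF T, of i] x step by auto
qed

lemma Lset_carrierR: "a \<in> Lset p I k \<Longrightarrow> a \<in> carrierR k"
  by (simp add: Lset_def split: if_splits)

lemma resR_in_tambara_ideal_of_Lset:
  assumes "p > 0" and T: "is_tambara_ideal p n I" and "k \<le> n"
    and a: "a \<in> Lset p I k" and "i < k"
  shows "resR p k i a \<in> I i"
proof -
  have top: "resR p k (k - 1) a \<in> I (k - 1)" using a \<open>i < k\<close> by (simp add: Lset_def)
  have "resR p (k - 1) i (resR p k (k - 1) a) \<in> I i"
    using tambara_ideal_resR[OF \<open>p > 0\<close> T _ top, of i] \<open>i < k\<close> \<open>k \<le> n\<close> by simp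
  then show ?thesis
    using resR_trans[OF \<open>p > 0\<close> Lset_carrierR[OF a], of i "k - 1"] \<open>i < k\<close> by simp
qed

lemma exists_resR_in_Lset_notin:
  assumes "p > 0" and x: "x \<in> carrierR k" and "x \<notin> I k"
  shows "\<exists>i\<le>k. resR p k i x \<in> Lset p I i - I i"
proof -
  define P where "P i \<longleftrightarrow> i \<le> k \<and> resR p k i x \<notin> I i" for i
  have "P k" using assms by (simp add: P_def resR_id)
  then obtain i where "P i" and least: "\<And>i'. i' < i \<Longrightarrow> \<not> P i'"
    using exists_least_iff[of P] by blast
  then have "i \<le> k" and notin: "resR p k i x \<notin> I i" by (auto simp: P_def)
  have "resR p k i x \<in> Lset p I i"
  proof (cases "i = 0")
    case False
    then have "resR p k (i - 1) x \<in> I (i - 1)" using least[of "i - 1"] \<open>i \<le> k\<close> by (simp add: P_def)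
    then show ?thesis
      using False resR_trans[OF \<open>p > 0\<close> x, of "i - 1" i] \<open>i \<le> k\<close> by (simp add: Lset_def resR_carrierR)
  qed (simp add: Lset_def resR_carrierR)
  then show ?thesis using \<open>i \<le> k\<close> notin by blast
qed

lemma prime_tambara_ideal_imp_condP:
  assumes p: "prime p" and P: "prime_tambara_ideal p n I" and "k \<le> n"
  shows "condP p I k"
  unfolding condP_def
proof (intro allI impI ballI)
  fix i a b
  assume "i \<le> k" and a: "a \<in> Lset p I k" and b: "b \<in> Lset p I i - I i"
    and H: "multR p k a (jndR p i k b) \<in> I k"
  have p0: "p > 0" using p prime_gt_0_nat by blast
  have T: "is_tambara_ideal p n I"
    using P by (simp add: prime_tambara_ideal_def proper_tambara_ideal_def)
  have ac: "a \<in> carrierR k" and bc: "b \<in> carrierR i" using a b by (auto intro: Lset_carrierR)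
  have "multR p (max i' j) (jndR p i' (max i' j) (resR p k i' a))
          (jndR p j (max i' j) (resR p i j b)) \<in> I (max i' j)"
    if "i' \<le> k" and "j \<le> i" for i' j
  proof (cases "i' < k")
    case True
    then have "jndR p i' (max i' j) (resR p k i' a) \<in> I (max i' j)"
      using that \<open>i \<le> k\<close> \<open>k \<le> n\<close>
      by (intro tambara_ideal_jndR[OF p T] resR_in_tambara_ideal_of_Lset[OF p0 T _ a]) simp_all
    then show ?thesis
      using that \<open>i \<le> k\<close> \<open>k \<le> n\<close>
      by (subst multR_commute) (simp add: tambara_ideal_multR[OF T] jndR_carrierR)
  next
    case False
    then have k: "i' = k" "max i' j = k" using that \<open>i \<le> k\<close> by auto
    then have a_top: "jndR p i' (max i' j) (resR p k i' a) = a"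
      using ac p0 by (simp add: resR_id jndR_id)
    show ?thesis
    proof (cases "j < i")
      case True
      then have "jndR p j k (resR p i j b) \<in> I k"
        using \<open>i \<le> k\<close> \<open>k \<le> n\<close> b
        by (intro tambara_ideal_jndR[OF p T] resR_in_tambara_ideal_of_Lset[OF p0 T]) simp_all
      then show ?thesis using a_top k ac \<open>k \<le> n\<close> by (simp add: tambara_ideal_multR[OF T])
    next
      case False
      then show ?thesis using a_top k H \<open>j \<le> i\<close> bc by (simp add: resR_id)
    qed
  qed
  then have "a \<in> I k \<or> b \<in> I i"
    using P \<open>i \<le> k\<close> \<open>k \<le> n\<close> ac bc unfolding prime_tambara_ideal_def by blast
  then show "a \<in> I k" using b by blast
qed

lemma condP_imp_prime_tambara_ideal:
  assumes p: "prime p" and proper: "proper_tambara_ideal p n I"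
    and C: "\<And>k. k \<le> n \<Longrightarrow> condP p I k"
  shows "prime_tambara_ideal p n I"
  unfolding prime_tambara_ideal_def
proof (intro conjI allI impI proper)
  fix k l a b
  assume "l \<le> k \<and> k \<le> n \<and> a \<in> carrierR k \<and> b \<in> carrierR l"
  then have "l \<le> k" "k \<le> n" and ac: "a \<in> carrierR k" and bc: "b \<in> carrierR l" by auto
  assume H: "\<forall>i\<le>k. \<forall>j\<le>l. multR p (max i j) (jndR p i (max i j) (resR p k i a))
                 (jndR p j (max i j) (resR p l j b)) \<in> I (max i j)"
  show "a \<in> I k \<or> b \<in> I l"
  proof (rule ccontr)
    assume "\<not> (a \<in> I k \<or> b \<in> I l)"
    have p0: "p > 0" using p prime_gt_0_nat by blast
    obtain i where "i \<le> k" and a': "resR p k i a \<in> Lset p I i - I i"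
      using exists_resR_in_Lset_notin[OF p0 ac] \<open>\<not> (a \<in> I k \<or> b \<in> I l)\<close> by blast
    obtain j where "j \<le> l" and b': "resR p l j b \<in> Lset p I j - I j"
      using exists_resR_in_Lset_notin[OF p0 bc] \<open>\<not> (a \<in> I k \<or> b \<in> I l)\<close> by blast
    have Hij: "multR p (max i j) (jndR p i (max i j) (resR p k i a))
                 (jndR p j (max i j) (resR p l j b)) \<in> I (max i j)"
      using H \<open>i \<le> k\<close> \<open>j \<le> l\<close> by blast
    show False
    proof (cases "j \<le> i")
      case True
      have "multR p i (resR p k i a) (jndR p j i (resR p l j b)) \<in> I i"
        using Hij True p0 by (simp add: jndR_id resR_carrierR max_absorb1)
      moreover have "condP p I i" using C \<open>i \<le> k\<close> \<open>k \<le> n\<close> by simp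
      ultimately have "resR p k i a \<in> I i"
        using True a' b' unfolding condP_def by blast
      then show False using a' by simp
    next
      case False
      have "multR p j (resR p l j b) (jndR p i j (resR p k i a)) \<in> I j"
        using Hij False p0 by (simp add: jndR_id resR_carrierR max_absorb2 multR_commute)
      moreover have "condP p I j" using C \<open>j \<le> l\<close> \<open>l \<le> k\<close> \<open>k \<le> n\<close> by simp
      moreover have "i \<le> j" using False by simp
      ultimately have "resR p l j b \<in> I j"
        using a' b' unfolding condP_def by blast
      then show False using b' by simp
    qed
  qed
qed

theorem proposition4:
  fixes p r n :: nat and I :: "nat \<Rightarrow> elt set"
  assumes "prime p" and "n \<le> r"
    and "proper_tambara_ideal p n I"
  shows "prime_tambara_ideal p n I \<longleftrightarrow> (\<forall>k\<le>n. condP p I k)"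
  using prime_tambara_ideal_imp_condP[OF assms(1)] condP_imp_prime_tambara_ideal[OF assms(1,3)] by blast

end
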